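(* Let $T=(t_{ij})$ be an $\mathbb{N}$-tableau of shape $\lambda$ and let $\widetilde{U}_T=(\widetilde{u}_{ijk})$ be the array defined in the context. Then for all $(i,j,k)$ in its index set: $\widetilde{u}_{i,j,0}=-\mathrm{rect}_T(i,j)$, $\widetilde{u}_{i,j,\min(i,j)}=0$, and for $0<k<\min(i,j)$, \[\widetilde{u}_{ijk}=\max\bigl(\widetilde{u}_{i-1,j,k}+\widetilde{u}_{i,j-1,k-1},\ \widetilde{u}_{i-1,j,k-1}+\widetilde{u}_{i,j-1,k}\bigr)-\widetilde{u}_{i-1,j-1,k-1}.\] That is, $\widetilde{U}_T$ satisfies the tropical octahedron recurrence.
   Context: Partitions are drawn in English notation with matrix coordinates: the box in row $i$ and column $j$ is $(i,j)$. An $\mathbb{N}$-tableau of shape $\lambda$ is an assignment of a nonnegative integer to each box of $\lambda$. For a box $(i,j)$ of $\lambda$, $\mathrm{rect}_T(i,j)=\sum_{k=1}^{i}\sum_{l=1}^{j}t_{kl}$; if $(i,j)$ is not a box of $\lambda$, $\mathrm{rect}_T(i,j)$ is interpreted as $0$. The array $U_T=(u_{ijk})$ is indexed by all $(i,j,k)\in\mathbb{Z}^3$ such that $(i+a,j+b)$ is a box of $\lambda$ for some $a,b\in\{0,1,2\}$ and $0\le k\le\min(i,j)+1$. Its entries are: $u_{i,j,0}=0$ and $u_{i,j,\min(i,j)+1}=0$, and for $0<k<\min(i,j)+1$, \[u_{ijk}=\min(u_{i-1,j,k-1},u_{i,j-1,k-1})+\max(u_{i-1,j,k},u_{i,j-1,k})-u_{i-1,j-1,k-1}+t_{ijk},\]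 where $t_{ij1}=t_{ij}$ if $(i,j)\in\lambda$ (and $0$ otherwise) and $t_{ijk}=0$ for $k\ne1$. The array $\overline{U}_T=(\overline{u}_{ijk})$ is indexed by all $(i,j,k)\in\mathbb{Z}^3$ such that $(i+a,j+b)$ is a box of $\lambda$ for some $a,b\in\{0,1\}$ and $0\le k\le\min(i,j)$, with $\overline{u}_{ijk}=\sum_{l=0}^{k}u_{ijl}$. Finally $\widetilde{U}_T=(\widetilde{u}_{ijk})$ has the same index set as $\overline{U}_T$ and $\widetilde{u}_{ijk}=\overline{u}_{ijk}-\mathrm{rect}_T(i,j)$. *)

theory Defs
  imports Main
begin

text \<open>A partition is a weakly decreasing list of positive integers (its parts).
  Boxes are in matrix coordinates (i,j), 1-based.\<close>

definition is_partition :: "nat list \<Rightarrow> bool" where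
  "is_partition lam \<longleftrightarrow> sorted_wrt (\<ge>) lam \<and> 0 \<notin> set lam"

definition in_shape :: "nat list \<Rightarrow> int \<Rightarrow> int \<Rightarrow> bool" where
  "in_shape lam i j \<longleftrightarrow> 1 \<le> i \<and> i \<le> int (length lam) \<and> 1 \<le> j \<and> j \<le> int (lam ! nat (i - 1))"

text \<open>An N-tableau of shape lam is given by a function T; only its values on boxes of lam
  are used. tent lam T i j is the entry t_ij for boxes and 0 otherwise (this is t_{ij1}).\<close>

definition tent :: "nat list \<Rightarrow> (int \<Rightarrow> int \<Rightarrow> nat) \<Rightarrow> int \<Rightarrow> int \<Rightarrow> int" where
  "tent lam T i j = (if in_shape lam i j then int (T i j) else 0)"

definition rect :: "nat list \<Rightarrow> (int \<Rightarrow> int \<Rightarrow> nat) \<Rightarrow> int \<Rightarrow> int \<Rightarrow> int" where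
  "rect lam T i j = (if in_shape lam i j
     then (\<Sum>k\<in>{1..i}. \<Sum>l\<in>{1..j}. tent lam T k l) else 0)"

text \<open>The array U_T, extended as a total function (its values on the index set of the paper
  are given by the defining recurrence; boundary values k = 0 and k = min(i,j)+1 are 0).\<close>

function uarr :: "nat list \<Rightarrow> (int \<Rightarrow> int \<Rightarrow> nat) \<Rightarrow> int \<Rightarrow> int \<Rightarrow> int \<Rightarrow> int" where
  "uarr lam T i j k =
     (if 0 < k \<and> k < min i j + 1 then
        min (uarr lam T (i - 1) j (k - 1)) (uarr lam T i (j - 1) (k - 1))
        + max (uarr lam T (i - 1) j k) (uarr lam T i (j - 1) k)
        - uarr lam T (i - 1) (j - 1) (k - 1)
        + (if k = 1 then tent lam T i j else 0)
      else 0)"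
  by pat_completeness auto
termination
  by (relation "measure (\<lambda>(lam, T, i, j, k). nat (i + j))") auto

definition ubar :: "nat list \<Rightarrow> (int \<Rightarrow> int \<Rightarrow> nat) \<Rightarrow> int \<Rightarrow> int \<Rightarrow> int \<Rightarrow> int" where
  "ubar lam T i j k = (\<Sum>l\<in>{0..k}. uarr lam T i j l)"

definition utilde :: "nat list \<Rightarrow> (int \<Rightarrow> int \<Rightarrow> nat) \<Rightarrow> int \<Rightarrow> int \<Rightarrow> int \<Rightarrow> int" where
  "utilde lam T i j k = ubar lam T i j k - rect lam T i j"

definition tilde_index :: "nat list \<Rightarrow> int \<Rightarrow> int \<Rightarrow> int \<Rightarrow> bool" where
  "tilde_index lam i j k \<longleftrightarrow>
     (\<exists>a\<in>{0,1}. \<exists>b\<in>{0,1}. in_shape lam (i + a) (j + b)) \<and> 0 \<le> k \<and> k \<le> min i j"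

end

theory Submission
  imports Defs
begin

text \<open>Write \<open>u(i,j,k)\<close> and \<open>\<overline>u(i,j,k)\<close> for the entries of \<open>U\<close> and of its partial sums
  \<open>\<overline>U\<close>. Summing the recurrence of \<open>U\<close> over \<open>l \<le> k\<close> telescopes, because
  \<open>min x y + max x y = x + y\<close>:
  \<open>\<overline>u(i,j,k) = \<overline>u(i-1,j,k-1) + \<overline>u(i,j-1,k-1) - \<overline>u(i-1,j-1,k-1) + max (u(i-1,j,k)) (u(i,j-1,k)) + t(i,j)\<close>.
  Subtracting the inclusion-exclusion recurrence of the rectangle sums and writing
  \<open>u(i-1,j,k) = \<overline>u(i-1,j,k) - \<overline>u(i-1,j,k-1)\<close> (likewise for \<open>(i,j-1)\<close>) turns this into
  the tropical octahedron recurrence.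
  At \<open>k = min i j\<close> one argument of the max vanishes and the other is nonnegative, so
  \<open>\<overline>u(i,j,min i j)\<close> obeys the rectangle-sum recurrence and equals \<open>rect(i,j)\<close>.
  Nonnegativity of \<open>U\<close> comes from the Gelfand-Tsetlin interlacing of neighbouring rows
  \<open>u(i-1,j,_)\<close>, \<open>u(i,j,_)\<close>, which the local rule preserves. Finally, on the index set
  every box weakly north-west of \<open>(i,j)\<close> lies in \<open>\<lambda>\<close>, so \<open>rect\<close> is the unrestricted
  rectangle sum there.\<close>

declare uarr.simps[simp del]

lemma uarr_eq_0: "\<not> (0 < k \<and> k \<le> min i j) \<Longrightarrow> uarr lam T i j k = 0"
  by (subst uarr.simps) auto

lemma uarr_rec:
  "0 < k \<Longrightarrow> k \<le> min i j \<Longrightarrow> uarr lam T i j k =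
     min (uarr lam T (i - 1) j (k - 1)) (uarr lam T i (j - 1) (k - 1))
     + max (uarr lam T (i - 1) j k) (uarr lam T i (j - 1) k)
     - uarr lam T (i - 1) (j - 1) (k - 1)
     + (if k = 1 then tent lam T i j else 0)"
  by (subst uarr.simps) auto

lemma uarr_eq_0_if_min_nonpos: "min i j \<le> 0 \<Longrightarrow> uarr lam T i j k = 0"
  by (intro uarr_eq_0) (auto simp: min_def)

lemma uarr_0 [simp]: "uarr lam T i j 0 = 0"
  by (simp add: uarr_eq_0)

lemma tent_nonneg: "0 \<le> tent lam T i j"
  by (simp add: tent_def)

definition interlaces :: "(int \<Rightarrow> int) \<Rightarrow> (int \<Rightarrow> int) \<Rightarrow> bool" where
  "interlaces mu la \<longleftrightarrow> (\<forall>k\<ge>1. la k \<le> mu k \<and> mu (k + 1) \<le> la k)"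

lemma local_rule_interlaces:
  fixes mu nu la :: "int \<Rightarrow> int" and t m :: int
  assumes mu_la: "interlaces mu la" and nu_la: "interlaces nu la"
    and mu_nonneg: "\<forall>k. 0 \<le> mu k" and nu_nonneg: "\<forall>k. 0 \<le> nu k"
    and zero: "mu 0 = 0" "nu 0 = 0" "la 0 = 0" and "0 \<le> t"
    and mu_vanish: "\<forall>k>m. mu k = 0" and nu_vanish: "\<forall>k>m. nu k = 0"
  defines "rho \<equiv> \<lambda>k. if 0 < k \<and> k \<le> m then
      min (mu (k - 1)) (nu (k - 1)) + max (mu k) (nu k) - la (k - 1)
      + (if k = 1 then t else 0) else 0"
  shows "interlaces rho mu \<and> interlaces rho nu \<and> (\<forall>k. 0 \<le> rho k)"
proof -
  have lower: "mu k \<le> rho k \<and> nu k \<le> rho k" if "1 \<le> k" for k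
  proof (cases "k \<le> m")
    case True
    have "la (k - 1) \<le> min (mu (k - 1)) (nu (k - 1))"
      using mu_la nu_la zero that unfolding interlaces_def
      by (cases "k = 1") (auto dest: spec[of _ "k - 1"])
    then show ?thesis using True that \<open>0 \<le> t\<close> by (auto simp: rho_def)
  next
    case False
    then show ?thesis using mu_vanish nu_vanish by (simp add: rho_def)
  qed
  have upper: "rho (k + 1) \<le> mu k \<and> rho (k + 1) \<le> nu k" if "1 \<le> k" for k
  proof -
    have "max (mu (k + 1)) (nu (k + 1)) \<le> la k"
      using mu_la nu_la that by (simp add: interlaces_def)
    then show ?thesis using that mu_nonneg nu_nonneg by (auto simp: rho_def)
  qed
  have "0 \<le> rho k" for k
  proof (cases "0 < k")
    case True
    then have "mu k \<le> rho k" using lower by simp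
    then show ?thesis using mu_nonneg order_trans by blast
  qed (simp add: rho_def)
  then show ?thesis using lower upper by (simp add: interlaces_def)
qed

lemma uarr_interlaces:
  "(\<forall>k. 0 \<le> uarr lam T i j k)
   \<and> interlaces (uarr lam T i j) (uarr lam T (i - 1) j)
   \<and> interlaces (uarr lam T i j) (uarr lam T i (j - 1))"
proof (induction "nat (i + j)" arbitrary: i j rule: less_induct)
  case less
  show ?case
  proof (cases "min i j \<le> 0")
    case True
    then show ?thesis by (simp add: interlaces_def uarr_eq_0_if_min_nonpos)
  next
    case False
    have IH: "(\<forall>k. 0 \<le> uarr lam T i' j' k) \<and> interlaces (uarr lam T i' j') (uarr lam T (i - 1) (j - 1))"
      if "(i', j') = (i - 1, j) \<or> (i', j') = (i, j - 1)" for i' j'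
      using less[of i' j'] that False by auto
    have uarr_ij: "uarr lam T i j = (\<lambda>k. if 0 < k \<and> k \<le> min i j then
        min (uarr lam T (i - 1) j (k - 1)) (uarr lam T i (j - 1) (k - 1))
        + max (uarr lam T (i - 1) j k) (uarr lam T i (j - 1) k)
        - uarr lam T (i - 1) (j - 1) (k - 1)
        + (if k = 1 then tent lam T i j else 0) else 0)"
      by (auto simp: uarr_rec uarr_eq_0)
    have "\<forall>k>min i j. uarr lam T (i - 1) j k = 0" "\<forall>k>min i j. uarr lam T i (j - 1) k = 0"
      by (auto intro!: uarr_eq_0)
    with IH[of "i - 1" j] IH[of i "j - 1"] show ?thesis
      using local_rule_interlaces[of "uarr lam T (i - 1) j" "uarr lam T (i - 1) (j - 1)"
          "uarr lam T i (j - 1)" "tent lam T i j" "min i j"]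
      by (simp only: uarr_ij uarr_0 tent_nonneg simp_thms)
  qed
qed

lemma uarr_nonneg: "0 \<le> uarr lam T i j k"
  using uarr_interlaces by blast

lemma ubar_0 [simp]: "ubar lam T i j 0 = 0"
  by (simp add: ubar_def)

lemma ubar_plus_one: "0 \<le> k \<Longrightarrow> ubar lam T i j (k + 1) = ubar lam T i j k + uarr lam T i j (k + 1)"
  by (simp add: ubar_def atLeastAtMostPlus1_int_conv add.commute)

lemma ubar_beyond_min:
  assumes "0 \<le> min i j" "min i j \<le> k"
  shows "ubar lam T i j k = ubar lam T i j (min i j)"
  unfolding ubar_def
  by (rule sum.mono_neutral_right) (use assms in \<open>auto intro!: uarr_eq_0\<close>)

lemma ubar_rec:
  assumes "0 < k" "k \<le> min i j"
  shows "ubar lam T i j k =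
      ubar lam T (i - 1) j (k - 1) + ubar lam T i (j - 1) (k - 1) - ubar lam T (i - 1) (j - 1) (k - 1)
      + max (uarr lam T (i - 1) j k) (uarr lam T i (j - 1) k) + tent lam T i j"
proof -
  have "1 \<le> k" using assms(1) by simp
  then show ?thesis using assms(2)
  proof (induction k rule: int_ge_induct)
    case base
    then show ?case using ubar_plus_one[of 0 lam T i j] by (simp add: uarr_rec)
  next
    case (step k)
    have "min x y + max x y = x + y" for x y :: int
      by (simp add: min_def max_def)
    then show ?case
      using step uarr_rec[of "k + 1" i j lam T]
        ubar_plus_one[of k lam T i j] ubar_plus_one[of "k - 1" lam T "i - 1" j]
        ubar_plus_one[of "k - 1" lam T i "j - 1"] ubar_plus_one[of "k - 1" lam T "i - 1" "j - 1"]
      by simp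
  qed
qed

lemma max_uarr_at_min:
  "max (uarr lam T (i - 1) j (min i j)) (uarr lam T i (j - 1) (min i j))
   = uarr lam T (i - 1) j (min i j) + uarr lam T i (j - 1) (min i j)"
proof -
  have "uarr lam T (i - 1) j (min i j) = 0 \<or> uarr lam T i (j - 1) (min i j) = 0"
    by (cases "i \<le> j") (simp_all add: uarr_eq_0)
  then show ?thesis using uarr_nonneg[of lam T] by auto
qed

definition rectsum :: "nat list \<Rightarrow> (int \<Rightarrow> int \<Rightarrow> nat) \<Rightarrow> int \<Rightarrow> int \<Rightarrow> int" where
  "rectsum lam T i j = (\<Sum>k\<in>{1..i}. \<Sum>l\<in>{1..j}. tent lam T k l)"

lemma rectsum_nonpos:
  assumes "min i j \<le> 0"
  shows "rectsum lam T i j = 0"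
proof -
  have "{1..i} = {} \<or> {1..j} = {}" using assms by auto
  then show ?thesis by (auto simp: rectsum_def)
qed

lemma rectsum_rec:
  assumes "1 \<le> i" "1 \<le> j"
  shows "rectsum lam T i j =
    rectsum lam T (i - 1) j + rectsum lam T i (j - 1) - rectsum lam T (i - 1) (j - 1) + tent lam T i j"
proof -
  have "{1..i} = insert i {1..i - 1}" "{1..j} = insert j {1..j - 1}"
    using assms by auto
  then show ?thesis unfolding rectsum_def by (simp add: sum.distrib)
qed

lemma ubar_saturated: "min i j \<le> k \<Longrightarrow> ubar lam T i j k = rectsum lam T i j"
proof (induction "nat (i + j)" arbitrary: i j k rule: less_induct)
  case less
  show ?case
  proof (cases "min i j \<le> 0")
    case True
    then show ?thesis by (simp add: ubar_def uarr_eq_0_if_min_nonpos rectsum_nonpos)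
  next
    case False
    define m where "m = min i j"
    have m: "0 < m" "m \<le> min i j" unfolding m_def using False by auto
    have "ubar lam T i j k = ubar lam T i j m"
      unfolding m_def using False less.prems by (intro ubar_beyond_min) auto
    also have "\<dots> = ubar lam T (i - 1) j (m - 1) + ubar lam T i (j - 1) (m - 1)
        - ubar lam T (i - 1) (j - 1) (m - 1)
        + max (uarr lam T (i - 1) j m) (uarr lam T i (j - 1) m) + tent lam T i j"
      using ubar_rec[of m i j lam T] m by simp
    also have "\<dots> = ubar lam T (i - 1) j m + ubar lam T i (j - 1) m
        - ubar lam T (i - 1) (j - 1) (m - 1) + tent lam T i j"
      using max_uarr_at_min[of lam T i j] ubar_plus_one[of "m - 1" lam T "i - 1" j]
        ubar_plus_one[of "m - 1" lam T i "j - 1"] m by (simp add: m_def)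
    also have "\<dots> = rectsum lam T (i - 1) j + rectsum lam T i (j - 1)
        - rectsum lam T (i - 1) (j - 1) + tent lam T i j"
      using less.hyps[of "i - 1" j m] less.hyps[of i "j - 1" m] less.hyps[of "i - 1" "j - 1" "m - 1"]
        False by (auto simp: m_def min_def)
    also have "\<dots> = rectsum lam T i j"
      using rectsum_rec[of i j] False by simp
    finally show ?thesis .
  qed
qed

lemma ubar_minus_rectsum_octahedron:
  fixes lam :: "nat list" and T :: "int \<Rightarrow> int \<Rightarrow> nat"
  assumes "0 < k" "k \<le> min i j"
  defines "v \<equiv> \<lambda>i j k. ubar lam T i j k - rectsum lam T i j"
  shows "v i j k = max (v (i - 1) j k + v i (j - 1) (k - 1)) (v (i - 1) j (k - 1) + v i (j - 1) k)
      - v (i - 1) (j - 1) (k - 1)"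
proof -
  have "max (x + c) (y + c) = max x y + c" for x y c :: int
    by (simp add: max_def)
  then show ?thesis
    using ubar_rec[OF assms(1,2), of lam T] rectsum_rec[of i j lam T] assms(1,2)
      ubar_plus_one[of "k - 1" lam T "i - 1" j] ubar_plus_one[of "k - 1" lam T i "j - 1"]
    by (simp add: v_def algebra_simps)
qed

lemma in_shape_downward_closed:
  assumes "is_partition lam" "in_shape lam i' j'" "1 \<le> i" "i \<le> i'" "1 \<le> j" "j \<le> j'"
  shows "in_shape lam i j"
proof -
  have sorted: "sorted_wrt (\<ge>) lam" using assms(1) by (simp add: is_partition_def)
  have box: "i' \<le> int (length lam)" "j' \<le> int (lam ! nat (i' - 1))"
    using assms(2) by (auto simp: in_shape_def)
  have "lam ! nat (i' - 1) \<le> lam ! nat (i - 1)"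
    using sorted_wrt_nth_less[OF sorted, of "nat (i - 1)" "nat (i' - 1)"] assms box
    by (cases "i = i'") auto
  then show ?thesis using assms box unfolding in_shape_def by auto
qed

lemma utilde_eq_ubar_minus_rectsum:
  assumes "is_partition lam" "in_shape lam i' j'" "i \<le> i'" "j \<le> j'"
  shows "utilde lam T i j k = ubar lam T i j k - rectsum lam T i j"
proof (cases "min i j \<le> 0")
  case True
  then show ?thesis by (auto simp: utilde_def rect_def rectsum_def in_shape_def)
next
  case False
  then have "in_shape lam i j"
    using in_shape_downward_closed[OF assms(1,2)] assms(3,4) by simp
  then show ?thesis by (simp add: utilde_def rect_def rectsum_def)
qed

theorem proposition4p3:
  fixes lam :: "nat list" and T :: "int \<Rightarrow> int \<Rightarrow> nat" and i j k :: int
  assumes "is_partition lam"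
    and "tilde_index lam i j k"
  shows "(k = 0 \<longrightarrow> utilde lam T i j 0 = - rect lam T i j)
       \<and> (k = min i j \<longrightarrow> utilde lam T i j (min i j) = 0)
       \<and> (0 < k \<and> k < min i j \<longrightarrow>
            utilde lam T i j k =
              max (utilde lam T (i - 1) j k + utilde lam T i (j - 1) (k - 1))
                  (utilde lam T (i - 1) j (k - 1) + utilde lam T i (j - 1) k)
              - utilde lam T (i - 1) (j - 1) (k - 1))"
proof -
  obtain i' j' where box: "in_shape lam i' j'" "i \<le> i'" "j \<le> j'"
    using assms(2) unfolding tilde_index_def by force
  have utilde: "utilde lam T i'' j'' k' = ubar lam T i'' j'' k' - rectsum lam T i'' j''"
    if "i'' \<le> i" "j'' \<le> j" for i'' j'' k'
    using utilde_eq_ubar_minus_rectsum[OF assms(1) box(1)] box(2,3) that by simp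
  have "utilde lam T i j 0 = - rect lam T i j"
    by (simp add: utilde_def)
  moreover have "utilde lam T i j (min i j) = 0"
    using utilde ubar_saturated by simp
  moreover have "utilde lam T i j k =
      max (utilde lam T (i - 1) j k + utilde lam T i (j - 1) (k - 1))
          (utilde lam T (i - 1) j (k - 1) + utilde lam T i (j - 1) k)
      - utilde lam T (i - 1) (j - 1) (k - 1)" if "0 < k" "k < min i j"
    using ubar_minus_rectsum_octahedron[of k i j lam T] that utilde by simp
  ultimately show ?thesis by blast
qed

end
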